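(* Let $M$ be a matroid on $S$ and $N$ a matroid on $T$ with $S\cap T=\emptyset$, and let $L=M\mathbin{\Box} N$. A set $C\subseteq S\cup T$ is a circuit of $L$ if and only if either $C\subseteq S$ and $C$ is a circuit of $M$, or $C\cap S$ is independent in $M$, the restriction $N|(C\cap T)$ has no isthmus, and $\lambda_M(C\cap S)+1=\nu_N(C\cap T)$.
   Context: For a matroid $M$ on $S$ write $\rho_M$ for rank, $\rho(M)=\rho_M(S)$, $\nu_M(A)=|A|-\rho_M(A)$, $\lambda_M(A)=\rho(M)-\rho_M(A)$. For matroids $M$ on $S$ and $N$ on $T$ with $S\cap T=\emptyset$, the free product $M\mathbin{\Box} N$ is the matroid on $S\cup T$ whose independent sets are those $A$ with $A\cap S$ independent in $M$ and $\lambda_M(A\cap S)\geq\nu_N(A\cap T)$. *)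

theory Defs
  imports Main
begin

definition matroid :: "'a set \<Rightarrow> ('a set \<Rightarrow> bool) \<Rightarrow> bool" where
  "matroid E indep \<longleftrightarrow>
     finite E \<and> indep {} \<and>
     (\<forall>I. indep I \<longrightarrow> I \<subseteq> E) \<and>
     (\<forall>I J. indep J \<and> I \<subseteq> J \<longrightarrow> indep I) \<and>
     (\<forall>I J. indep I \<and> indep J \<and> card I < card J \<longrightarrow> (\<exists>x \<in> J - I. indep (insert x I)))"

definition mrank :: "('a set \<Rightarrow> bool) \<Rightarrow> 'a set \<Rightarrow> nat" where
  "mrank indep A = Max (card ` {I. I \<subseteq> A \<and> indep I})"

definition nullity :: "('a set \<Rightarrow> bool) \<Rightarrow> 'a set \<Rightarrow> nat" where
  "nullity indep A = card A - mrank indep A"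

definition mlambda :: "'a set \<Rightarrow> ('a set \<Rightarrow> bool) \<Rightarrow> 'a set \<Rightarrow> nat" where
  "mlambda E indep A = mrank indep E - mrank indep A"

definition circuit :: "'a set \<Rightarrow> ('a set \<Rightarrow> bool) \<Rightarrow> 'a set \<Rightarrow> bool" where
  "circuit E indep C \<longleftrightarrow> C \<subseteq> E \<and> \<not> indep C \<and> (\<forall>x \<in> C. indep (C - {x}))"

definition basis :: "'a set \<Rightarrow> ('a set \<Rightarrow> bool) \<Rightarrow> 'a set \<Rightarrow> bool" where
  "basis E indep B \<longleftrightarrow> indep B \<and> (\<forall>I. indep I \<and> B \<subseteq> I \<longrightarrow> I = B)"

definition isthmus :: "'a set \<Rightarrow> ('a set \<Rightarrow> bool) \<Rightarrow> 'a \<Rightarrow> bool" where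
  "isthmus E indep e \<longleftrightarrow> e \<in> E \<and> (\<forall>B. basis E indep B \<longrightarrow> e \<in> B)"

definition restr_indep :: "('a set \<Rightarrow> bool) \<Rightarrow> 'a set \<Rightarrow> 'a set \<Rightarrow> bool" where
  "restr_indep indep X I \<longleftrightarrow> indep I \<and> I \<subseteq> X"

definition free_prod_indep ::
  "'a set \<Rightarrow> ('a set \<Rightarrow> bool) \<Rightarrow> 'a set \<Rightarrow> ('a set \<Rightarrow> bool) \<Rightarrow> 'a set \<Rightarrow> bool" where
  "free_prod_indep S indM T indN A \<longleftrightarrow>
     A \<subseteq> S \<union> T \<and> indM (A \<inter> S) \<and> mlambda S indM (A \<inter> S) \<ge> nullity indN (A \<inter> T)"

end

theory Submission
  imports Defs
begin

text \<open>
  Write \<open>X = C \<inter> S\<close> and \<open>Y = C \<inter> T\<close>. If \<open>X\<close> is independent in \<open>M\<close>, deleting an element of \<open>X\<close>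
  raises \<open>\<lambda>\<^sub>M(X)\<close> by exactly one. Deleting an element \<open>e\<close> of \<open>Y\<close> leaves \<open>\<nu>\<^sub>N(Y)\<close> unchanged if \<open>e\<close>
  is an isthmus of \<open>N|Y\<close> and lowers it by exactly one otherwise. Hence, when \<open>Y \<noteq> {}\<close>, the set
  \<open>C\<close> is dependent in \<open>L\<close> while all its single deletions are independent precisely when
  \<open>X\<close> is independent, \<open>\<lambda>\<^sub>M(X) < \<nu>\<^sub>N(Y)\<close>, and every deletion from \<open>Y\<close> closes the gap: the gap
  is exactly one and \<open>N|Y\<close> has no isthmus. When \<open>Y = {}\<close>, \<open>L\<close> agrees with \<open>M\<close> on subsets of \<open>C\<close>.
\<close>

lemma matroid_finite_ground: "matroid E ind \<Longrightarrow> finite E"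
  by (simp add: matroid_def)

lemma matroid_indep_subset_ground: "matroid E ind \<Longrightarrow> ind I \<Longrightarrow> I \<subseteq> E"
  by (simp add: matroid_def)

lemma matroid_indep_empty: "matroid E ind \<Longrightarrow> ind {}"
  by (simp add: matroid_def)

lemma matroid_indep_subset:
  assumes "matroid E ind" "ind J" "I \<subseteq> J"
  shows "ind I"
proof -
  have "\<forall>I J. ind J \<and> I \<subseteq> J \<longrightarrow> ind I"
    using assms(1) by (simp add: matroid_def)
  with assms(2,3) show ?thesis by blast
qed

lemma matroid_augment:
  assumes "matroid E ind" "ind I" "ind J" "card I < card J"
  shows "\<exists>x \<in> J - I. ind (insert x I)"
proof -
  have "\<forall>I J. ind I \<and> ind J \<and> card I < card J \<longrightarrow> (\<exists>x \<in> J - I. ind (insert x I))"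
    using assms(1) by (simp add: matroid_def)
  with assms(2-4) show ?thesis by blast
qed

lemma matroid_indep_finite: "matroid E ind \<Longrightarrow> ind I \<Longrightarrow> finite I"
  by (rule finite_subset[OF matroid_indep_subset_ground matroid_finite_ground])

lemma finite_card_indep_subsets:
  assumes "matroid E ind"
  shows "finite (card ` {I. I \<subseteq> A \<and> ind I})"
proof (rule finite_subset)
  show "card ` {I. I \<subseteq> A \<and> ind I} \<subseteq> {..card E}"
    using card_mono[OF matroid_finite_ground matroid_indep_subset_ground] assms by blast
qed simp

lemma card_le_mrank:
  assumes "matroid E ind" "I \<subseteq> A" "ind I"
  shows "card I \<le> mrank ind A"
  unfolding mrank_def using assms(2,3) by (intro Max_ge finite_card_indep_subsets[OF assms(1)]) blast

lemma mrank_attained: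
  assumes "matroid E ind"
  obtains I where "I \<subseteq> A" "ind I" "card I = mrank ind A"
proof -
  have "card ` {I. I \<subseteq> A \<and> ind I} \<noteq> {}"
    using matroid_indep_empty[OF assms] by blast
  then have "mrank ind A \<in> card ` {I. I \<subseteq> A \<and> ind I}"
    unfolding mrank_def by (rule Max_in[OF finite_card_indep_subsets[OF assms]])
  then obtain I where "I \<in> {I. I \<subseteq> A \<and> ind I}" "mrank ind A = card I"
    by (rule imageE)
  then show ?thesis by (intro that) simp_all
qed

lemma mrank_mono:
  assumes "matroid E ind" "A \<subseteq> B"
  shows "mrank ind A \<le> mrank ind B"
proof -
  obtain I where "I \<subseteq> A" "ind I" "card I = mrank ind A"
    using mrank_attained[OF assms(1)] .
  then show ?thesis using assms card_le_mrank[of E ind I B] by auto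
qed

lemma mrank_le_card:
  assumes "matroid E ind" "finite A"
  shows "mrank ind A \<le> card A"
proof -
  obtain I where "I \<subseteq> A" "ind I" "card I = mrank ind A"
    using mrank_attained[OF assms(1)] .
  then show ?thesis using assms(2) card_mono by metis
qed

lemma mrank_indep:
  assumes "matroid E ind" "ind I"
  shows "mrank ind I = card I"
  using card_le_mrank[OF assms(1) order_refl assms(2)]
    mrank_le_card[OF assms(1) matroid_indep_finite[OF assms]] by simp

lemma mrank_le_mrank_Diff_singleton:
  assumes "matroid E ind"
  shows "mrank ind A \<le> Suc (mrank ind (A - {x}))"
proof -
  obtain I where I: "I \<subseteq> A" "ind I" "card I = mrank ind A"
    using mrank_attained[OF assms] .
  have "card I \<le> Suc (card (I - {x}))"
    by (cases "x \<in> I") (auto simp: card_Diff_singleton)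
  moreover have "card (I - {x}) \<le> mrank ind (A - {x})"
    using I(1) by (intro card_le_mrank[OF assms _ matroid_indep_subset[OF assms I(2)]]) auto
  ultimately show ?thesis using I(3) by simp
qed

text \<open>Every basis of \<open>N|Y\<close> has size \<open>\<rho>\<^sub>N(Y)\<close>, so \<open>y\<close> lies in all of them iff no independent
  subset of \<open>Y - {y}\<close> reaches that size.\<close>

lemma isthmus_restr_iff:
  assumes m: "matroid E ind"
  shows "isthmus Y (restr_indep ind Y) y \<longleftrightarrow> y \<in> Y \<and> mrank ind (Y - {y}) < mrank ind Y"
proof (intro iffI conjI)
  assume isth: "isthmus Y (restr_indep ind Y) y"
  then show "y \<in> Y" by (simp add: isthmus_def)
  show "mrank ind (Y - {y}) < mrank ind Y"
  proof (rule ccontr)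
    assume "\<not> ?thesis"
    then have ge: "mrank ind Y \<le> mrank ind (Y - {y})" by simp
    obtain I where I: "I \<subseteq> Y - {y}" "ind I" "card I = mrank ind (Y - {y})"
      using mrank_attained[OF m] .
    have "basis Y (restr_indep ind Y) I"
      unfolding basis_def restr_indep_def
    proof (intro conjI allI impI)
      fix J assume J: "(ind J \<and> J \<subseteq> Y) \<and> I \<subseteq> J"
      have "finite J" using matroid_indep_finite[OF m] J by blast
      have "card J \<le> mrank ind Y" using card_le_mrank[OF m, of J Y] J by blast
      with ge I(3) have "card J \<le> card I" by simp
      with J \<open>finite J\<close> have "card I = card J" using card_mono[of J I] by simp
      with J \<open>finite J\<close> show "J = I" using card_subset_eq[of J I] by simp
    qed (use I in auto)
    then show False using isth I(1) by (auto simp: isthmus_def)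
  qed
next
  assume y: "y \<in> Y \<and> mrank ind (Y - {y}) < mrank ind Y"
  show "isthmus Y (restr_indep ind Y) y"
    unfolding isthmus_def
  proof (intro conjI allI impI)
    fix B assume "basis Y (restr_indep ind Y) B"
    then have B: "ind B" "B \<subseteq> Y" and B_max: "\<And>J. ind J \<Longrightarrow> J \<subseteq> Y \<Longrightarrow> B \<subseteq> J \<Longrightarrow> J = B"
      unfolding basis_def restr_indep_def by auto
    obtain I where I: "I \<subseteq> Y" "ind I" "card I = mrank ind Y"
      using mrank_attained[OF m] .
    have B_card: "mrank ind Y \<le> card B"
    proof (rule ccontr)
      assume "\<not> ?thesis"
      then obtain z where "z \<in> I - B" "ind (insert z B)"
        using matroid_augment[OF m B(1) I(2)] I(3) by auto
      then show False using B_max[of "insert z B"] B I(1) by blast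
    qed
    show "y \<in> B"
    proof (rule ccontr)
      assume "y \<notin> B"
      with B have "card B \<le> mrank ind (Y - {y})" by (intro card_le_mrank[OF m]) auto
      with y B_card show False by simp
    qed
  qed (use y in simp)
qed

lemma nullity_Diff_isthmus:
  assumes "matroid E ind" "finite Y" "isthmus Y (restr_indep ind Y) y"
  shows "nullity ind (Y - {y}) = nullity ind Y"
proof -
  have "y \<in> Y" "mrank ind (Y - {y}) < mrank ind Y"
    using assms(3) unfolding isthmus_restr_iff[OF assms(1)] by simp_all
  moreover have "mrank ind Y \<le> Suc (mrank ind (Y - {y}))"
    using mrank_le_mrank_Diff_singleton[OF assms(1)] .
  moreover have "mrank ind Y \<le> card Y"
    using mrank_le_card[OF assms(1,2)] .
  ultimately show ?thesis by (simp add: nullity_def card_Diff_singleton)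
qed

lemma nullity_Diff_not_isthmus:
  assumes "matroid E ind" "finite Y" "y \<in> Y" "\<not> isthmus Y (restr_indep ind Y) y"
  shows "Suc (nullity ind (Y - {y})) = nullity ind Y"
proof -
  have "mrank ind Y \<le> mrank ind (Y - {y})"
    using assms(3,4) unfolding isthmus_restr_iff[OF assms(1)] by simp
  moreover have "mrank ind (Y - {y}) \<le> mrank ind Y"
    using mrank_mono[OF assms(1)] by blast
  moreover have "mrank ind (Y - {y}) \<le> card (Y - {y})"
    using mrank_le_card[OF assms(1)] assms(2) by blast
  moreover have "Suc (card (Y - {y})) = card Y"
    using card_Suc_Diff1[OF assms(2,3)] .
  ultimately show ?thesis by (simp add: nullity_def)
qed

lemma mlambda_Diff_indep:
  assumes "matroid E ind" "ind X" "x \<in> X"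
  shows "mlambda E ind (X - {x}) = Suc (mlambda E ind X)"
proof -
  have "ind (X - {x})" using matroid_indep_subset[OF assms(1,2)] by blast
  then have "mrank ind (X - {x}) = card X - 1" "mrank ind X = card X"
    using assms by (simp_all add: mrank_indep card_Diff_singleton)
  moreover have "card X \<le> mrank ind E"
    using card_le_mrank[OF assms(1) matroid_indep_subset_ground assms(2)] assms(1,2) .
  moreover have "card X > 0"
    using assms matroid_indep_finite card_gt_0_iff by blast
  ultimately show ?thesis by (simp add: mlambda_def)
qed

lemma free_prod_indep_Diff_T:
  assumes "S \<inter> T = {}" "C \<subseteq> S \<union> T" "y \<in> T"
  shows "free_prod_indep S indM T indN (C - {y}) \<longleftrightarrow>
    indM (C \<inter> S) \<and> nullity indN (C \<inter> T - {y}) \<le> mlambda S indM (C \<inter> S)"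
proof -
  have "(C - {y}) \<inter> S = C \<inter> S" "(C - {y}) \<inter> T = C \<inter> T - {y}"
    using assms by blast+
  moreover have "C - {y} \<subseteq> S \<union> T" using assms(2) by blast
  ultimately show ?thesis unfolding free_prod_indep_def by simp
qed

lemma free_prod_indep_Diff_S:
  assumes "S \<inter> T = {}" "C \<subseteq> S \<union> T" "x \<in> S"
  shows "free_prod_indep S indM T indN (C - {x}) \<longleftrightarrow>
    indM (C \<inter> S - {x}) \<and> nullity indN (C \<inter> T) \<le> mlambda S indM (C \<inter> S - {x})"
proof -
  have "(C - {x}) \<inter> S = C \<inter> S - {x}" "(C - {x}) \<inter> T = C \<inter> T"
    using assms by blast+
  moreover have "C - {x} \<subseteq> S \<union> T" using assms(2) by blast
  ultimately show ?thesis unfolding free_prod_indep_def by simp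
qed

lemma free_prod_circuit_subset_iff:
  assumes "S \<inter> T = {}" "C \<subseteq> S"
  shows "circuit (S \<union> T) (free_prod_indep S indM T indN) C \<longleftrightarrow> circuit S indM C"
proof -
  have "free_prod_indep S indM T indN A \<longleftrightarrow> indM A" if "A \<subseteq> C" for A
  proof -
    have "A \<inter> S = A" "A \<inter> T = {}" using assms that by blast+
    moreover have "A \<subseteq> S \<union> T" using assms(2) that by blast
    ultimately show ?thesis unfolding free_prod_indep_def nullity_def by simp
  qed
  moreover have "C \<subseteq> S \<union> T" using assms(2) by blast
  ultimately show ?thesis using assms(2) unfolding circuit_def by simp
qed

lemma free_prod_circuitD:
  assumes M: "matroid S indM" and N: "matroid T indN" and ST: "S \<inter> T = {}"
    and C: "circuit (S \<union> T) (free_prod_indep S indM T indN) C" and "C \<inter> T \<noteq> {}"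
  shows "indM (C \<inter> S)" "\<not> (\<exists>e. isthmus (C \<inter> T) (restr_indep indN (C \<inter> T)) e)"
    "mlambda S indM (C \<inter> S) + 1 = nullity indN (C \<inter> T)"
proof -
  let ?X = "C \<inter> S" and ?Y = "C \<inter> T"
  have CST: "C \<subseteq> S \<union> T" and dependent: "\<not> free_prod_indep S indM T indN C"
    and deletion: "\<And>x. x \<in> C \<Longrightarrow> free_prod_indep S indM T indN (C - {x})"
    using C by (auto simp: circuit_def)
  have Y_finite: "finite ?Y" using matroid_finite_ground[OF N] by blast
  have delete_Y: "indM ?X \<and> nullity indN (?Y - {y}) \<le> mlambda S indM ?X" if "y \<in> ?Y" for y
  proof -
    from that have "y \<in> C" "y \<in> T" by simp_all
    then have "free_prod_indep S indM T indN (C - {y})" using deletion by blast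
    then show ?thesis using free_prod_indep_Diff_T[OF ST CST \<open>y \<in> T\<close>] by blast
  qed
  obtain y0 where y0: "y0 \<in> ?Y" using \<open>?Y \<noteq> {}\<close> by blast
  then show X_indep: "indM ?X" using delete_Y by blast
  with dependent CST have gap: "mlambda S indM ?X < nullity indN ?Y"
    by (auto simp: free_prod_indep_def)
  have "nullity indN ?Y \<le> Suc (nullity indN (?Y - {y0}))"
    using nullity_Diff_isthmus[OF N Y_finite] nullity_Diff_not_isthmus[OF N Y_finite y0]
    by (cases "isthmus ?Y (restr_indep indN ?Y) y0") auto
  with gap delete_Y[OF y0] show "mlambda S indM ?X + 1 = nullity indN ?Y" by simp
  show "\<not> (\<exists>e. isthmus ?Y (restr_indep indN ?Y) e)"
  proof
    assume "\<exists>e. isthmus ?Y (restr_indep indN ?Y) e"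
    then obtain e where e: "isthmus ?Y (restr_indep indN ?Y) e" by blast
    then have "e \<in> ?Y" by (simp add: isthmus_def)
    then have "nullity indN (?Y - {e}) \<le> mlambda S indM ?X" using delete_Y by simp
    with gap show False using nullity_Diff_isthmus[OF N Y_finite e] by simp
  qed
qed

lemma free_prod_circuitI:
  assumes M: "matroid S indM" and N: "matroid T indN" and ST: "S \<inter> T = {}"
    and CST: "C \<subseteq> S \<union> T" and X_indep: "indM (C \<inter> S)"
    and no_isthmus: "\<not> (\<exists>e. isthmus (C \<inter> T) (restr_indep indN (C \<inter> T)) e)"
    and gap: "mlambda S indM (C \<inter> S) + 1 = nullity indN (C \<inter> T)"
  shows "circuit (S \<union> T) (free_prod_indep S indM T indN) C"
  unfolding circuit_def
proof (intro conjI ballI)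
  let ?X = "C \<inter> S" and ?Y = "C \<inter> T"
  show "C \<subseteq> S \<union> T" by fact
  show "\<not> free_prod_indep S indM T indN C"
    using gap by (simp add: free_prod_indep_def)
  fix x assume "x \<in> C"
  then consider "x \<in> ?X" | "x \<in> ?Y" using CST by blast
  then show "free_prod_indep S indM T indN (C - {x})"
  proof cases
    case 1
    then have "x \<in> S" by simp
    have "indM (?X - {x})"
      by (rule matroid_indep_subset[OF M X_indep Diff_subset])
    moreover have "mlambda S indM (?X - {x}) = Suc (mlambda S indM ?X)"
      by (rule mlambda_Diff_indep[OF M X_indep 1])
    with gap have "nullity indN ?Y \<le> mlambda S indM (?X - {x})" by linarith
    ultimately show ?thesis using free_prod_indep_Diff_S[OF ST CST \<open>x \<in> S\<close>] by blast
  next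
    case 2
    then have "x \<in> T" by simp
    have "finite ?Y" using matroid_finite_ground[OF N] by blast
    then have "Suc (nullity indN (?Y - {x})) = nullity indN ?Y"
      using nullity_Diff_not_isthmus[OF N _ 2] no_isthmus by blast
    with gap have "nullity indN (?Y - {x}) \<le> mlambda S indM ?X" by linarith
    then show ?thesis using X_indep free_prod_indep_Diff_T[OF ST CST \<open>x \<in> T\<close>] by blast
  qed
qed

theorem proposition3p7:
  fixes S T C :: "'a set" and indM indN :: "'a set \<Rightarrow> bool"
  assumes "matroid S indM" and "matroid T indN" and "S \<inter> T = {}"
    and "C \<subseteq> S \<union> T"
  shows "circuit (S \<union> T) (free_prod_indep S indM T indN) C \<longleftrightarrow>
     ((C \<subseteq> S \<and> circuit S indM C) \<or>
      (indM (C \<inter> S) \<and>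
       \<not> (\<exists>e. isthmus (C \<inter> T) (restr_indep indN (C \<inter> T)) e) \<and>
       mlambda S indM (C \<inter> S) + 1 = nullity indN (C \<inter> T)))"
proof (cases "C \<inter> T = {}")
  case True
  then have "C \<subseteq> S" using assms(4) by blast
  moreover have "nullity indN (C \<inter> T) = 0" using True by (simp add: nullity_def)
  ultimately show ?thesis using free_prod_circuit_subset_iff[OF assms(3) \<open>C \<subseteq> S\<close>] by simp
next
  case False
  then have "\<not> C \<subseteq> S" using assms(3) by blast
  then show ?thesis
    using free_prod_circuitD[OF assms(1-3) _ False] free_prod_circuitI[OF assms] by blast
qed

end
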